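(* Let $I\subset\mathbb R$ be a bounded closed non-degenerate interval and $f\in L^{r_0}(I)$ for some $r_0>1$. Then $\tau^f_{1+}:=\lim_{r\downarrow1}\tau_r^f$ exists, and $\tau^f_{1+}\in B^f$.
   Context: For $f\in L^r(I)$ with $r>1$, $\tau_r^f$ denotes the unique real number minimizing $t\mapsto\|f-t\|_{L^r(I)}$. A measurable $g:I\to\overline{\mathbb R}$ is balanced if $|\lambda(\{g>0\})-\lambda(\{g<0\})|\le\lambda(\{g=0\})$ ($\lambda$ Lebesgue measure); $B^f=\{t\in\mathbb R:f-t\text{ is balanced}\}$. *)

theory Defs
  imports "HOL-Analysis.Analysis"
begin

definition in_Lr :: "real \<Rightarrow> real set \<Rightarrow> (real \<Rightarrow> real) \<Rightarrow> bool" where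
  "in_Lr r I f \<longleftrightarrow> set_borel_measurable lebesgue I f
      \<and> set_integrable lebesgue I (\<lambda>x. \<bar>f x\<bar> powr r)"

definition Lr_norm :: "real \<Rightarrow> real set \<Rightarrow> (real \<Rightarrow> real) \<Rightarrow> real" where
  "Lr_norm r I f = (LINT x:I|lebesgue. \<bar>f x\<bar> powr r) powr (1 / r)"

definition tau :: "real \<Rightarrow> real set \<Rightarrow> (real \<Rightarrow> real) \<Rightarrow> real" where
  "tau r I f = (THE t. \<forall>s. Lr_norm r I (\<lambda>x. f x - t) \<le> Lr_norm r I (\<lambda>x. f x - s))"

definition balanced :: "real set \<Rightarrow> (real \<Rightarrow> real) \<Rightarrow> bool" where
  "balanced I g \<longleftrightarrow>
     \<bar>measure lebesgue {x\<in>I. g x > 0} - measure lebesgue {x\<in>I. g x < 0}\<bar>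
       \<le> measure lebesgue {x\<in>I. g x = 0}"

definition balanced_set :: "real set \<Rightarrow> (real \<Rightarrow> real) \<Rightarrow> real set" where
  "balanced_set I f = {t. balanced I (\<lambda>x. f x - t)}"

end

theory Submission
  imports Defs
begin

text \<open>
  Let \<open>\<phi>\<^sub>r(t) = \<integral> sgn (f - t) \<bar>f - t\<bar>\<^sup>r\<^sup>-\<^sup>1\<close>. Up to the factor \<open>-r\<close> it is the derivative of the
  strictly convex function \<open>t \<mapsto> \<integral> \<bar>f - t\<bar>\<^sup>r\<close>, so \<open>\<tau>\<^sub>r\<close> is the unique zero of the strictly
  decreasing continuous function \<open>\<phi>\<^sub>r\<close>. By dominated convergence \<open>\<phi>\<^sub>r \<rightarrow> \<phi>\<^sub>1\<close> pointwise as
  \<open>r \<down> 1\<close>, where \<open>\<phi>\<^sub>1(t) = \<lambda>{f > t} - \<lambda>{f < t}\<close>. The points where \<open>\<phi>\<^sub>1\<close> changes sign form the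
  interval \<open>[\<alpha>, \<beta>]\<close> of medians of \<open>f\<close>; every median is balanced (a one-sided limit of
  \<open>\<phi>\<^sub>1\<close> picks up the atom \<open>{f = c}\<close>), and \<open>\<tau>\<^sub>r\<close> eventually lies in every neighbourhood of
  \<open>[\<alpha>, \<beta>]\<close>.

  If \<open>\<alpha> < \<beta>\<close>, then \<open>f\<close> takes almost no values in \<open>(\<alpha>, \<beta>)\<close>, so \<open>\<phi>\<^sub>1 = 0\<close> there and one
  looks at the next order: \<open>\<phi>\<^sub>r(t) / (r - 1) \<rightarrow> \<Psi>(t) = \<integral> sgn (f - t) ln \<bar>f - t\<bar>\<close>, a strictly
  decreasing function on \<open>(\<alpha>, \<beta>)\<close>. Hence \<open>\<tau>\<^sub>r\<close> converges to the point \<open>\<gamma> \<in> [\<alpha>, \<beta>]\<close> where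
  \<open>\<Psi>\<close> changes sign. One argument covers both cases, since for \<open>\<alpha> = \<beta>\<close> the point \<open>\<gamma>\<close> is
  forced to be \<open>\<alpha>\<close>.
\<close>

section \<open>Real-variable inequalities and limits\<close>

lemma powr_le_1_plus_powr:
  fixes y a b :: real
  assumes "0 \<le> a" "a \<le> b" "0 \<le> y"
  shows "y powr a \<le> 1 + y powr b"
proof (cases "y \<le> 1")
  case True
  then have "y powr a \<le> 1" using assms by (simp add: powr_le1)
  then show ?thesis using powr_ge_zero[of y b] by linarith
next
  case False
  then have "y powr a \<le> y powr b" using assms by (intro powr_mono) auto
  then show ?thesis by simp
qed

lemma powr_add_le:
  fixes x y p :: real
  assumes "0 \<le> x" "0 \<le> y" "0 \<le> p"
  shows "(x + y) powr p \<le> 2 powr p * (x powr p + y powr p)"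
proof -
  have "(x + y) powr p \<le> (2 * max x y) powr p"
    using assms by (intro powr_mono2) auto
  also have "\<dots> = 2 powr p * max x y powr p"
    using assms by (simp add: powr_mult)
  also have "\<dots> \<le> 2 powr p * (x powr p + y powr p)"
    by (intro mult_left_mono) (auto simp: max_def)
  finally show ?thesis .
qed

lemma bernoulli_powr_strict:
  fixes u r :: real
  assumes "0 < u" "u \<noteq> 1" "1 < r"
  shows "1 + r * (u - 1) < u powr r"
proof -
  define g where "g = (\<lambda>v::real. v powr r - r * v)"
  have g': "(g has_real_derivative r * (v powr (r - 1) - 1)) (at v)" if "0 < v" for v
    unfolding g_def using that by (auto intro!: derivative_eq_intros simp: algebra_simps)
  show ?thesis
  proof (cases "1 < u")
    case True
    obtain z where z: "1 < z" "z < u" "g u - g 1 = (u - 1) * (r * (z powr (r - 1) - 1))"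
      using MVT2[of 1 u g "\<lambda>v. r * (v powr (r - 1) - 1)"] True g' by force
    have "1 < z powr (r - 1)"
      using z assms powr_less_mono2[of "r - 1" 1 z] by simp
    then have "0 < (u - 1) * (r * (z powr (r - 1) - 1))"
      using True assms by simp
    then show ?thesis using z(3) by (simp add: g_def algebra_simps)
  next
    case False
    then have "u < 1" using assms by auto
    obtain z where z: "u < z" "z < 1" "g 1 - g u = (1 - u) * (r * (z powr (r - 1) - 1))"
      using MVT2[of u 1 g "\<lambda>v. r * (v powr (r - 1) - 1)"] \<open>u < 1\<close> g' assms by force
    have "z powr (r - 1) < 1"
      using z assms powr_less_mono2[of "r - 1" z 1] by simp
    then have "(1 - u) * (r * (z powr (r - 1) - 1)) < 0"
      using \<open>u < 1\<close> assms by (simp add: mult_pos_neg)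
    then show ?thesis using z(3) by (simp add: g_def algebra_simps)
  qed
qed

definition signed_powr :: "real \<Rightarrow> real \<Rightarrow> real" where
  "signed_powr s y = sgn y * \<bar>y\<bar> powr s"

lemma signed_powr_0 [simp]: "signed_powr 0 y = sgn y"
  by (simp add: signed_powr_def)

lemma abs_signed_powr: "\<bar>signed_powr s y\<bar> \<le> \<bar>y\<bar> powr s"
  by (simp add: signed_powr_def abs_mult abs_sgn_eq)

lemma measurable_signed_powr [measurable]: "signed_powr s \<in> borel_measurable borel"
  unfolding signed_powr_def by measurable

lemma signed_powr_strict_mono:
  assumes "0 < s" "y < z"
  shows "signed_powr s y < signed_powr s z"
proof -
  consider "0 \<le> y" | "y < 0" "0 < z" | "z \<le> 0" by linarith
  then show ?thesis
  proof cases
    case 1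
    then show ?thesis using assms
      by (auto simp: signed_powr_def sgn_if intro!: powr_less_mono2)
  next
    case 2
    then show ?thesis
      using powr_gt_zero[of "- y" s] powr_gt_zero[of z s] by (simp add: signed_powr_def del: powr_gt_zero)
  next
    case 3
    then have "\<bar>z\<bar> powr s < \<bar>y\<bar> powr s" using assms
      by (intro powr_less_mono2) auto
    then show ?thesis using assms 3 by (auto simp: signed_powr_def sgn_if)
  qed
qed

lemma isCont_signed_powr:
  assumes "0 < s"
  shows "isCont (signed_powr s) y"
proof -
  have "isCont (signed_powr s) y" if "y \<noteq> 0"
    unfolding signed_powr_def using that
    by (intro continuous_intros isCont_sgn) auto
  moreover have "isCont (signed_powr s) 0"
  proof -
    have "((\<lambda>y. \<bar>y\<bar> powr s) \<longlongrightarrow> 0) (at 0)"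
      using assms by (intro tendsto_eq_intros) auto
    then have "((\<lambda>y. \<bar>signed_powr s y\<bar>) \<longlongrightarrow> 0) (at 0)"
      by (rule Lim_null_comparison[rotated]) (simp add: abs_signed_powr)
    then show ?thesis
      unfolding isCont_def tendsto_rabs_zero_iff by (simp add: signed_powr_def[abs_def])
  qed
  ultimately show ?thesis by blast
qed

lemma abs_powr_gt_tangent_pos:
  fixes y z r :: real
  assumes "0 < z" "y \<noteq> z" "1 < r"
  shows "z powr r + r * z powr (r - 1) * (y - z) < \<bar>y\<bar> powr r"
proof (cases "y \<le> 0")
  case True
  have "r * z powr (r - 1) * (y - z) \<le> r * z powr (r - 1) * (- z)"
    using True assms by (intro mult_left_mono) auto
  also have "\<dots> = - r * z powr r"
    using assms by (simp add: powr_diff)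
  finally have "z powr r + r * z powr (r - 1) * (y - z) \<le> (1 - r) * z powr r"
    by (simp add: algebra_simps)
  also have "\<dots> < 0" using assms by (intro mult_neg_pos) auto
  finally show ?thesis using powr_ge_zero[of "\<bar>y\<bar>" r] by linarith
next
  case False
  define u where "u = y / z"
  have u: "0 < u" "u \<noteq> 1" using False assms by (auto simp: u_def)
  have y: "y = u * z" using assms by (simp add: u_def)
  have "z powr r = z powr (r - 1) * z"
    using assms by (simp add: powr_diff)
  then have "z powr r + r * z powr (r - 1) * (y - z) = (1 + r * (u - 1)) * z powr r"
    by (simp add: y algebra_simps)
  also have "\<dots> < u powr r * z powr r"
    using bernoulli_powr_strict[OF u assms(3)] assms by (intro mult_strict_right_mono) auto
  also have "\<dots> = \<bar>y\<bar> powr r"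
    using u assms by (simp add: y powr_mult)
  finally show ?thesis .
qed

text \<open>\<open>r * signed_powr (r - 1) z\<close> is the derivative of \<open>\<bar>y\<bar> powr r\<close> at \<open>z\<close>.\<close>

lemma abs_powr_gt_tangent:
  fixes y z r :: real
  assumes "y \<noteq> z" "1 < r"
  shows "\<bar>z\<bar> powr r + r * signed_powr (r - 1) z * (y - z) < \<bar>y\<bar> powr r"
proof -
  consider "0 < z" | "z = 0" | "z < 0" by linarith
  then show ?thesis
  proof cases
    case 1
    then show ?thesis using abs_powr_gt_tangent_pos[OF 1 assms] by (simp add: signed_powr_def)
  next
    case 2
    then show ?thesis using assms by (simp add: signed_powr_def)
  next
    case 3
    then show ?thesis
      using abs_powr_gt_tangent_pos[of "- z" "- y" r] assms by (simp add: signed_powr_def algebra_simps)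
  qed
qed

lemma tendsto_powr_diff_quotient:
  fixes y :: real
  assumes "0 < y"
  shows "((\<lambda>s. (y powr s - 1) / s) \<longlongrightarrow> ln y) (at_right 0)"
proof -
  have "((\<lambda>s. exp (s * ln y)) has_real_derivative exp (0 * ln y) * ln y) (at 0)"
    by (auto intro!: derivative_eq_intros)
  then have "((\<lambda>s. (y powr s - 1) / s) \<longlongrightarrow> ln y) (at 0)"
    using assms by (simp add: has_field_derivative_iff powr_def)
  then show ?thesis by (rule tendsto_mono[OF at_within_le_at])
qed

lemma abs_ln_le:
  fixes u \<delta> :: real
  assumes "0 < \<delta>" "\<delta> \<le> u"
  shows "\<bar>ln u\<bar> \<le> \<bar>ln \<delta>\<bar> + u"
proof (cases "1 \<le> u")
  case True
  then show ?thesis using ln_le_minus_one[of u] by simp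
next
  case False
  then have "ln \<delta> \<le> ln u" "ln u < 0" using assms by simp_all
  then show ?thesis using assms by linarith
qed

lemma abs_powr_diff_quotient_le:
  fixes u s s0 \<delta> :: real
  assumes "0 < \<delta>" "\<delta> \<le> 1" "\<delta> \<le> u" "0 < s" "s \<le> s0"
  shows "\<bar>(u powr s - 1) / s\<bar> \<le> - ln \<delta> + u powr (2 * s0) / s0"
proof -
  have u: "0 < u" using assms by linarith
  have ln_le: "v * ln u \<le> u powr v - 1" if "0 < v" for v
    using ln_le_minus_one[of "u powr v"] u that by (simp add: ln_powr)
  have le_ln: "u powr s - 1 \<le> u powr s * (s * ln u)"
    using ln_le_minus_one[of "1 / u powr s"] u assms by (simp add: ln_div ln_powr field_simps)
  define q where "q = (u powr s - 1) / s"
  have q: "ln u \<le> q" "q \<le> u powr s * ln u"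
    using ln_le[of s] le_ln assms by (simp_all add: q_def field_simps)
  show ?thesis
  proof (cases "1 \<le> u")
    case True
    have "ln u \<le> u powr s0 / s0"
      using ln_le[of s0] assms by (simp add: field_simps)
    then have "u powr s * ln u \<le> u powr s0 * (u powr s0 / s0)"
      using True assms by (intro mult_mono powr_mono) auto
    also have "\<dots> = u powr (2 * s0) / s0"
      using u by (simp add: powr_add[symmetric])
    finally have "u powr s * ln u \<le> u powr (2 * s0) / s0" .
    moreover have "0 \<le> ln u" "0 \<le> - ln \<delta>" using True assms by simp_all
    ultimately show ?thesis using q by (simp add: q_def[symmetric])
  next
    case False
    then have "\<bar>q\<bar> \<le> - ln u"
      using q u by (smt (verit) ln_le_zero_iff mult_nonneg_nonpos powr_ge_zero)
    also have "\<dots> \<le> - ln \<delta>" using assms by simp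
    finally have "\<bar>q\<bar> \<le> - ln \<delta>" .
    moreover have "0 \<le> u powr (2 * s0) / s0" using assms by simp
    ultimately show ?thesis by (simp add: q_def[symmetric])
  qed
qed

lemma integral_dominated_convergence_within:
  fixes s :: "'b::first_countable_topology \<Rightarrow> 'a \<Rightarrow> real"
  assumes "\<And>t. s t \<in> borel_measurable M" "g \<in> borel_measurable M" "integrable M w"
    and lim: "AE x in M. ((\<lambda>t. s t x) \<longlongrightarrow> g x) (at c within S)"
    and bound: "\<forall>\<^sub>F t in at c within S. AE x in M. \<bar>s t x\<bar> \<le> w x"
  shows "((\<lambda>t. integral\<^sup>L M (s t)) \<longlongrightarrow> integral\<^sup>L M g) (at c within S)"
  unfolding tendsto_at_iff_sequentially comp_def
proof (intro allI impI)
  fix X assume "\<forall>i. X i \<in> S - {c}" "X \<longlonglongrightarrow> c"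
  then have X: "filterlim X (at c within S) sequentially"
    by (simp add: filterlim_at)
  from filterlim_iff[THEN iffD1, OF X, rule_format, OF bound]
  obtain N where N: "\<And>n. N \<le> n \<Longrightarrow> AE x in M. \<bar>s (X n) x\<bar> \<le> w x"
    by (auto simp: eventually_sequentially)
  show "(\<lambda>n. integral\<^sup>L M (s (X n))) \<longlonglongrightarrow> integral\<^sup>L M g"
  proof (rule LIMSEQ_offset, rule integral_dominated_convergence)
    show "AE x in M. norm (s (X (n + N)) x) \<le> w x" for n
      using N[of "n + N"] by simp
    show "AE x in M. (\<lambda>n. s (X (n + N)) x) \<longlonglongrightarrow> g x"
      using lim
    proof eventually_elim
      case (elim x)
      then show ?case
        by (intro LIMSEQ_ignore_initial_segment filterlim_compose[OF _ X])
    qed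
  qed (use assms in auto)
qed

lemma strict_antimono_sign_change:
  fixes g :: "real \<Rightarrow> real"
  assumes "a \<le> b" and antimono: "\<And>s t. a < s \<Longrightarrow> s < t \<Longrightarrow> t < b \<Longrightarrow> g t < g s"
  obtains c where "a \<le> c" "c \<le> b" "\<And>t. a < t \<Longrightarrow> t < c \<Longrightarrow> 0 < g t"
    "\<And>t. c < t \<Longrightarrow> t < b \<Longrightarrow> g t < 0"
proof -
  define P where "P = {t. a < t \<and> t < b \<and> 0 < g t}"
  define c where "c = Sup (insert a P)"
  have bdd: "bdd_above (insert a P)"
    using assms(1) by (intro bdd_aboveI[of _ b]) (auto simp: P_def)
  have "a \<le> c"
    unfolding c_def using bdd by (rule cSup_upper[rotated]) simp
  show ?thesis
  proof (rule that)
    show "a \<le> c" by fact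
    show "c \<le> b"
      unfolding c_def using assms(1) by (intro cSup_least) (auto simp: P_def)
    show "0 < g t" if "a < t" "t < c" for t
    proof -
      have "t < Sup (insert a P)"
        using \<open>t < c\<close> by (simp add: c_def)
      then obtain s where "s \<in> insert a P" "t < s"
        using less_cSup_iff[OF _ bdd] by blast
      then show ?thesis
        using antimono[of t s] \<open>a < t\<close> by (auto simp: P_def)
    qed
    show "g t < 0" if "c < t" "t < b" for t
    proof (rule ccontr)
      assume "\<not> g t < 0"
      define s where "s = (c + t) / 2"
      have "a < s" "s < t" "c < s"
        using \<open>a \<le> c\<close> that by (auto simp: s_def)
      then have "s \<in> P"
        using antimono[of s t] that \<open>\<not> g t < 0\<close> by (auto simp: P_def)
      then have "s \<le> c"
        unfolding c_def using bdd by (intro cSup_upper) auto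
      with \<open>c < s\<close> show False by simp
    qed
  qed
qed

section \<open>Moments of a function in \<open>L\<^sup>r\<close> of a finite measure\<close>

locale finite_Lr_function = finite_measure M for M :: "'a measure" +
  fixes f :: "'a \<Rightarrow> real" and r0 :: real
  assumes measure_space_pos: "0 < measure M (space M)"
    and f_measurable [measurable]: "f \<in> borel_measurable M"
    and r0_gt_1: "1 < r0"
    and integrable_abs_f_powr: "integrable M (\<lambda>x. \<bar>f x\<bar> powr r0)"
begin

text \<open>In the notation of the proof idea, \<open>signed_moment r\<close> is \<open>\<phi>\<^sub>r\<close>, \<open>tau_M r\<close> is \<open>\<tau>\<^sub>r\<close>,
  \<open>log_moment\<close> is \<open>\<Psi>\<close> and \<open>median_low\<close>, \<open>median_high\<close> are \<open>\<alpha>\<close>, \<open>\<beta>\<close>.\<close>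

definition abs_moment :: "real \<Rightarrow> real \<Rightarrow> real" where
  "abs_moment r t = (\<integral>x. \<bar>f x - t\<bar> powr r \<partial>M)"

definition signed_moment :: "real \<Rightarrow> real \<Rightarrow> real" where
  "signed_moment r t = (\<integral>x. signed_powr (r - 1) (f x - t) \<partial>M)"

definition tau_M :: "real \<Rightarrow> real" where
  "tau_M r = (THE t. \<forall>s. abs_moment r t powr (1 / r) \<le> abs_moment r s powr (1 / r))"

lemma emeasure_space_neq_0: "emeasure M (space M) \<noteq> 0"
  using measure_space_pos by (simp add: emeasure_eq_measure)

lemma integrable_dominant: "0 \<le> C \<Longrightarrow> integrable M (\<lambda>x. 1 + (\<bar>f x\<bar> + C) powr r0)"
proof -
  assume "0 \<le> C"
  have "integrable M (\<lambda>x. 1 + 2 powr r0 * (\<bar>f x\<bar> powr r0 + C powr r0))"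
    by (intro Bochner_Integration.integrable_add integrable_mult_right integrable_const
        integrable_abs_f_powr)
  then show ?thesis
    by (rule Bochner_Integration.integrable_bound)
       (use powr_add_le[of "\<bar>f _\<bar>" C r0] \<open>0 \<le> C\<close> r0_gt_1 in \<open>auto intro!: AE_I2\<close>)
qed

lemma abs_powr_le_dominant:
  assumes "0 \<le> p" "p \<le> r0" "\<bar>t\<bar> \<le> C"
  shows "\<bar>f x - t\<bar> powr p \<le> 1 + (\<bar>f x\<bar> + C) powr r0"
proof -
  have "\<bar>f x - t\<bar> powr p \<le> 1 + \<bar>f x - t\<bar> powr r0"
    using assms by (intro powr_le_1_plus_powr) auto
  also have "\<bar>f x - t\<bar> powr r0 \<le> (\<bar>f x\<bar> + C) powr r0"
    using assms r0_gt_1 by (intro powr_mono2) auto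
  finally show ?thesis by simp
qed

lemma abs_signed_powr_le_dominant:
  "0 \<le> p \<Longrightarrow> p \<le> r0 \<Longrightarrow> \<bar>t\<bar> \<le> C \<Longrightarrow> \<bar>signed_powr p (f x - t)\<bar> \<le> 1 + (\<bar>f x\<bar> + C) powr r0"
  using abs_signed_powr abs_powr_le_dominant order_trans by blast

lemma integrable_abs_powr: "0 \<le> p \<Longrightarrow> p \<le> r0 \<Longrightarrow> integrable M (\<lambda>x. \<bar>f x - t\<bar> powr p)"
  by (rule Bochner_Integration.integrable_bound[OF integrable_dominant[of "\<bar>t\<bar>"]])
     (use abs_powr_le_dominant in \<open>auto intro!: AE_I2\<close>)

lemma integrable_signed_powr: "0 \<le> p \<Longrightarrow> p \<le> r0 \<Longrightarrow> integrable M (\<lambda>x. signed_powr p (f x - t))"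
  by (rule Bochner_Integration.integrable_bound[OF integrable_dominant[of "\<bar>t\<bar>"]])
     (use abs_signed_powr_le_dominant in \<open>auto intro!: AE_I2\<close>)

lemma signed_moment_strict_antimono:
  assumes "1 < r" "r \<le> r0" "t < t'"
  shows "signed_moment r t' < signed_moment r t"
  unfolding signed_moment_def using assms
  by (intro integral_less_AE_space integrable_signed_powr emeasure_space_neq_0 AE_I2
      signed_powr_strict_mono) auto

lemma signed_moment_1_antimono:
  assumes "t \<le> t'"
  shows "signed_moment 1 t' \<le> signed_moment 1 t"
  unfolding signed_moment_def using assms r0_gt_1 integrable_signed_powr[of 0]
  by (intro integral_mono) (auto simp: sgn_if)

lemma signed_moment_1_eq:
  "signed_moment 1 t = measure M {x\<in>space M. t < f x} - measure M {x\<in>space M. f x < t}"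
proof -
  have "signed_moment 1 t
      = (\<integral>x. indicator {x\<in>space M. t < f x} x - indicator {x\<in>space M. f x < t} x \<partial>M)"
    unfolding signed_moment_def
    by (rule Bochner_Integration.integral_cong) (auto simp: sgn_if indicator_def)
  also have "\<dots> = measure M {x\<in>space M. t < f x} - measure M {x\<in>space M. f x < t}"
    by (subst Bochner_Integration.integral_diff)
       (auto simp: integrable_indicator_iff emeasure_eq_measure)
  finally show ?thesis .
qed

lemma isCont_signed_moment:
  assumes "1 < r" "r \<le> r0"
  shows "isCont (signed_moment r) z"
  unfolding isCont_def signed_moment_def
proof (rule integral_dominated_convergence_within)
  show "integrable M (\<lambda>x. 1 + (\<bar>f x\<bar> + (\<bar>z\<bar> + 1)) powr r0)"
    by (rule integrable_dominant) simp
  show "AE x in M. ((\<lambda>t. signed_powr (r - 1) (f x - t)) \<longlongrightarrow> signed_powr (r - 1) (f x - z)) (at z)"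
    using assms by (intro AE_I2 isCont_tendsto_compose[OF isCont_signed_powr] tendsto_intros) auto
  have "\<forall>\<^sub>F t in at z. \<bar>t\<bar> < \<bar>z\<bar> + 1"
    by (intro order_tendstoD(2)[OF tendsto_rabs[OF tendsto_ident_at]]) simp
  then show "\<forall>\<^sub>F t in at z. AE x in M. \<bar>signed_powr (r - 1) (f x - t)\<bar> \<le> 1 + (\<bar>f x\<bar> + (\<bar>z\<bar> + 1)) powr r0"
    by eventually_elim (use assms in \<open>auto intro!: AE_I2 abs_signed_powr_le_dominant\<close>)
qed measurable

lemma eventually_at_right_1_le_r0: "\<forall>\<^sub>F r in at_right 1. 1 < r \<and> r \<le> r0"
proof -
  have "\<forall>\<^sub>F r in at_right 1. r < r0"
    using r0_gt_1 by (simp add: eventually_at_right_field) (metis less_trans)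
  with eventually_at_right_less[of 1] show ?thesis
    by eventually_elim auto
qed

lemma tendsto_signed_moment_1:
  "((\<lambda>r. signed_moment r t) \<longlongrightarrow> signed_moment 1 t) (at_right 1)"
  unfolding signed_moment_def
proof (rule integral_dominated_convergence_within)
  show "integrable M (\<lambda>x. 1 + (\<bar>f x\<bar> + \<bar>t\<bar>) powr r0)"
    by (rule integrable_dominant) simp
  show "AE x in M. ((\<lambda>r. signed_powr (r - 1) (f x - t)) \<longlongrightarrow> signed_powr (1 - 1) (f x - t)) (at_right 1)"
  proof (intro AE_I2)
    fix x
    have "((\<lambda>r. \<bar>f x - t\<bar> powr (r - 1)) \<longlongrightarrow> \<bar>f x - t\<bar> powr (1 - 1)) (at_right 1)"
      if "f x \<noteq> t"
      using that by (intro tendsto_intros) auto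
    then show "((\<lambda>r. signed_powr (r - 1) (f x - t)) \<longlongrightarrow> signed_powr (1 - 1) (f x - t)) (at_right 1)"
      unfolding signed_powr_def by (cases "f x = t") (auto dest: tendsto_mult_left[where c = "sgn (f x - t)"])
  qed
  show "\<forall>\<^sub>F r in at_right 1. AE x in M. \<bar>signed_powr (r - 1) (f x - t)\<bar> \<le> 1 + (\<bar>f x\<bar> + \<bar>t\<bar>) powr r0"
    using eventually_at_right_1_le_r0
    by eventually_elim (auto intro!: AE_I2 abs_signed_powr_le_dominant)
qed measurable

lemma abs_moment_strict_min:
  assumes "1 < r" "r \<le> r0" "signed_moment r z = 0" "s \<noteq> z"
  shows "abs_moment r z < abs_moment r s"
proof -
  have int_abs: "integrable M (\<lambda>x. \<bar>f x - t\<bar> powr r)" for t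
    using assms by (intro integrable_abs_powr) auto
  have int_sg: "integrable M (\<lambda>x. signed_powr (r - 1) (f x - z))"
    using assms by (intro integrable_signed_powr) auto
  have "abs_moment r z = (\<integral>x. \<bar>f x - z\<bar> powr r + r * (z - s) * signed_powr (r - 1) (f x - z) \<partial>M)"
    using assms int_abs int_sg unfolding abs_moment_def signed_moment_def by simp
  also have "\<dots> < abs_moment r s"
    unfolding abs_moment_def
  proof (intro integral_less_AE_space emeasure_space_neq_0 AE_I2)
    show "integrable M (\<lambda>x. \<bar>f x - z\<bar> powr r + r * (z - s) * signed_powr (r - 1) (f x - z))"
      using int_abs int_sg by simp
    fix x
    show "\<bar>f x - z\<bar> powr r + r * (z - s) * signed_powr (r - 1) (f x - z) < \<bar>f x - s\<bar> powr r"
      using abs_powr_gt_tangent[of "f x - s" "f x - z" r] assms by (simp add: algebra_simps)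
  qed (use int_abs in simp)
  finally show ?thesis .
qed

lemma tau_M_eqI:
  assumes "1 < r" "r \<le> r0" "signed_moment r z = 0"
  shows "tau_M r = z"
  unfolding tau_M_def
proof (rule the_equality)
  have less: "abs_moment r z powr (1 / r) < abs_moment r s powr (1 / r)" if "s \<noteq> z" for s
    using abs_moment_strict_min[OF assms that] assms
    by (intro powr_less_mono2) (auto simp: abs_moment_def)
  then show "\<forall>s. abs_moment r z powr (1 / r) \<le> abs_moment r s powr (1 / r)"
    by (metis order_le_less)
  show "t = z" if "\<forall>s. abs_moment r t powr (1 / r) \<le> abs_moment r s powr (1 / r)" for t
    using that[rule_format, of z] less[of t] by linarith
qed

lemma signed_moment_1_pos_exists: "\<exists>t. 0 < signed_moment 1 t"
proof -
  have "((\<lambda>t. signed_moment 1 (- t)) \<longlongrightarrow> (\<integral>x. 1 \<partial>M)) at_top"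
    unfolding signed_moment_def signed_powr_0 diff_self
  proof (rule integral_dominated_convergence_at_top[where w = "\<lambda>_. 1"])
    have "\<forall>\<^sub>F t in at_top. sgn (f x - - t) = 1" for x
      using eventually_gt_at_top[of "- f x"] by eventually_elim simp
    then show "AE x in M. ((\<lambda>t. sgn (f x - - t)) \<longlongrightarrow> 1) at_top"
      by (intro AE_I2 tendsto_eventually)
  qed (auto simp: abs_sgn_eq)
  then have "\<forall>\<^sub>F t in at_top. 0 < signed_moment 1 (- t)"
    using measure_space_pos by (intro order_tendstoD(1)) auto
  then show ?thesis
    by (metis eventually_at_top_linorder order_refl)
qed

lemma signed_moment_1_neg_exists: "\<exists>t. signed_moment 1 t < 0"
proof -
  have "((\<lambda>t. signed_moment 1 t) \<longlongrightarrow> (\<integral>x. - 1 \<partial>M)) at_top"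
    unfolding signed_moment_def signed_powr_0 diff_self
  proof (rule integral_dominated_convergence_at_top[where w = "\<lambda>_. 1"])
    have "\<forall>\<^sub>F t in at_top. sgn (f x - t) = - 1" for x
      using eventually_gt_at_top[of "f x"] by eventually_elim simp
    then show "AE x in M. ((\<lambda>t. sgn (f x - t)) \<longlongrightarrow> - 1) at_top"
      by (intro AE_I2 tendsto_eventually)
  qed (auto simp: abs_sgn_eq)
  then have "\<forall>\<^sub>F t in at_top. signed_moment 1 t < 0"
    using measure_space_pos by (intro order_tendstoD(2)) auto
  then show ?thesis
    by (metis eventually_at_top_linorder order_refl)
qed

lemma eventually_signed_moment_tau_M:
  "\<forall>\<^sub>F r in at_right 1. 1 < r \<and> r \<le> r0 \<and> signed_moment r (tau_M r) = 0"
proof -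
  obtain t1 t2 where t: "0 < signed_moment 1 t1" "signed_moment 1 t2 < 0"
    using signed_moment_1_pos_exists signed_moment_1_neg_exists by blast
  then have "t1 \<le> t2"
    using signed_moment_1_antimono[of t2 t1] by force
  show ?thesis
    using order_tendstoD(1)[OF tendsto_signed_moment_1 t(1)]
      order_tendstoD(2)[OF tendsto_signed_moment_1 t(2)] eventually_at_right_1_le_r0
  proof eventually_elim
    case (elim r)
    have "continuous_on {t1..t2} (signed_moment r)"
      using elim by (intro continuous_at_imp_continuous_on ballI isCont_signed_moment) auto
    then obtain z where "signed_moment r z = 0"
      using IVT2'[of "signed_moment r" t2 0 t1] elim \<open>t1 \<le> t2\<close> by force
    with elim show ?case
      using tau_M_eqI by auto
  qed
qed

lemma eventually_less_tau_M:
  assumes "\<forall>\<^sub>F r in at_right 1. 0 < signed_moment r t"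
  shows "\<forall>\<^sub>F r in at_right 1. t < tau_M r"
  using assms eventually_signed_moment_tau_M
proof eventually_elim
  case (elim r)
  then show ?case
    using signed_moment_strict_antimono[of r "tau_M r" t] by (cases t "tau_M r" rule: linorder_cases) auto
qed

lemma eventually_tau_M_less:
  assumes "\<forall>\<^sub>F r in at_right 1. signed_moment r t < 0"
  shows "\<forall>\<^sub>F r in at_right 1. tau_M r < t"
  using assms eventually_signed_moment_tau_M
proof eventually_elim
  case (elim r)
  then show ?case
    using signed_moment_strict_antimono[of r t "tau_M r"] by (cases t "tau_M r" rule: linorder_cases) auto
qed

subsection \<open>Medians\<close>

text \<open>The interval \<open>[median_low, median_high]\<close> is the set of medians of \<open>f\<close>.\<close>

definition median_low :: real where
  "median_low = Sup {t. 0 < signed_moment 1 t}"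

definition median_high :: real where
  "median_high = Inf {t. signed_moment 1 t < 0}"

lemma signed_moment_1_sign_change_less:
  "0 < signed_moment 1 s \<Longrightarrow> signed_moment 1 t < 0 \<Longrightarrow> s < t"
  using signed_moment_1_antimono[of t s] by force

lemma bdd_above_signed_moment_1_pos: "bdd_above {t. 0 < signed_moment 1 t}"
proof -
  obtain t where "signed_moment 1 t < 0"
    using signed_moment_1_neg_exists by blast
  then show ?thesis
    using signed_moment_1_sign_change_less by (intro bdd_aboveI[of _ t]) (simp add: less_imp_le)
qed

lemma bdd_below_signed_moment_1_neg: "bdd_below {t. signed_moment 1 t < 0}"
proof -
  obtain t where "0 < signed_moment 1 t"
    using signed_moment_1_pos_exists by blast
  then show ?thesis
    using signed_moment_1_sign_change_less by (intro bdd_belowI[of _ t]) (simp add: less_imp_le)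
qed

lemma median_low_le_high: "median_low \<le> median_high"
  unfolding median_low_def median_high_def
proof (rule cSup_least)
  show "{t. 0 < signed_moment 1 t} \<noteq> {}"
    using signed_moment_1_pos_exists by blast
  show "s \<le> Inf {t. signed_moment 1 t < 0}" if "s \<in> {t. 0 < signed_moment 1 t}" for s
  proof (rule cInf_greatest)
    show "{t. signed_moment 1 t < 0} \<noteq> {}"
      using signed_moment_1_neg_exists by blast
  qed (use that signed_moment_1_sign_change_less in \<open>simp add: less_imp_le\<close>)
qed

lemma signed_moment_1_nonpos:
  assumes "median_low < t"
  shows "signed_moment 1 t \<le> 0"
proof (rule ccontr)
  assume "\<not> signed_moment 1 t \<le> 0"
  then have "t \<le> median_low"
    unfolding median_low_def by (intro cSup_upper bdd_above_signed_moment_1_pos) simp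
  with assms show False by simp
qed

lemma signed_moment_1_nonneg:
  assumes "t < median_high"
  shows "0 \<le> signed_moment 1 t"
proof (rule ccontr)
  assume "\<not> 0 \<le> signed_moment 1 t"
  then have "median_high \<le> t"
    unfolding median_high_def by (intro cInf_lower bdd_below_signed_moment_1_neg) simp
  with assms show False by simp
qed

lemma eventually_less_tau_M_below_median:
  assumes "t < median_low"
  shows "\<forall>\<^sub>F r in at_right 1. t < tau_M r"
proof -
  obtain t' where t': "t < t'" "0 < signed_moment 1 t'"
    using assms signed_moment_1_pos_exists bdd_above_signed_moment_1_pos
    by (auto simp: median_low_def less_cSup_iff)
  have "\<forall>\<^sub>F r in at_right 1. t' < tau_M r"
    by (rule eventually_less_tau_M[OF order_tendstoD(1)[OF tendsto_signed_moment_1 t'(2)]])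
  then show ?thesis
    by eventually_elim (use t'(1) in simp)
qed

lemma eventually_tau_M_less_above_median:
  assumes "median_high < t"
  shows "\<forall>\<^sub>F r in at_right 1. tau_M r < t"
proof -
  obtain t' where t': "t' < t" "signed_moment 1 t' < 0"
    using assms signed_moment_1_neg_exists bdd_below_signed_moment_1_neg
    by (auto simp: median_high_def cInf_less_iff)
  have "\<forall>\<^sub>F r in at_right 1. tau_M r < t'"
    by (rule eventually_tau_M_less[OF order_tendstoD(2)[OF tendsto_signed_moment_1 t'(2)]])
  then show ?thesis
    by eventually_elim (use t'(1) in simp)
qed

lemma tendsto_signed_moment_1_within:
  assumes e: "\<forall>\<^sub>F t in at c within S. sgn (c - t) = e"
  shows "(signed_moment 1 \<longlongrightarrow> signed_moment 1 c + e * measure M {x\<in>space M. f x = c})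
           (at c within S)"
proof -
  define g where "g x = sgn (f x - c) + e * indicator {x\<in>space M. f x = c} x" for x
  have "(signed_moment 1 \<longlongrightarrow> integral\<^sup>L M g) (at c within S)"
    unfolding signed_moment_def[abs_def] signed_powr_0 diff_self
  proof (rule integral_dominated_convergence_within[where w = "\<lambda>_. 1"])
    have "((\<lambda>t. sgn (f x - t)) \<longlongrightarrow> g x) (at c within S)" if "x \<in> space M" for x
    proof (cases "f x = c")
      case True
      then show ?thesis
        using that tendsto_eventually[OF e] by (simp add: g_def)
    next
      case False
      have "((\<lambda>t. sgn (f x - t)) \<longlongrightarrow> sgn (f x - c)) (at c within S)"
        using False by (intro tendsto_sgn tendsto_intros) simp
      then show ?thesis
        using False by (simp add: g_def)
    qed
    then show "AE x in M. ((\<lambda>t. sgn (f x - t)) \<longlongrightarrow> g x) (at c within S)"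
      by (rule AE_I2)
    show "g \<in> borel_measurable M"
      unfolding g_def by measurable
  qed (auto simp: abs_sgn_eq)
  also have "integral\<^sup>L M g = signed_moment 1 c + e * measure M {x\<in>space M. f x = c}"
    using integrable_signed_powr[of 0 c] r0_gt_1 unfolding g_def
    by (subst Bochner_Integration.integral_add)
       (auto simp: signed_moment_def integrable_indicator_iff emeasure_eq_measure)
  finally show ?thesis .
qed

lemma balanced_between_medians:
  assumes "median_low \<le> c" "c \<le> median_high"
  shows "\<bar>measure M {x\<in>space M. c < f x} - measure M {x\<in>space M. f x < c}\<bar>
           \<le> measure M {x\<in>space M. f x = c}"
proof -
  have "signed_moment 1 c - measure M {x\<in>space M. f x = c} \<le> 0"
  proof (rule tendsto_upperbound)
    show "(signed_moment 1 \<longlongrightarrow> signed_moment 1 c - measure M {x\<in>space M. f x = c}) (at_right c)"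
      using tendsto_signed_moment_1_within[where S = "{c<..}" and e = "- 1"]
      by (simp add: eventually_at_filter)
    show "\<forall>\<^sub>F t in at_right c. signed_moment 1 t \<le> 0"
      using eventually_at_right_less[of c] by eventually_elim (use assms signed_moment_1_nonpos in simp)
  qed simp
  moreover have "0 \<le> signed_moment 1 c + measure M {x\<in>space M. f x = c}"
  proof (rule tendsto_lowerbound)
    show "(signed_moment 1 \<longlongrightarrow> signed_moment 1 c + measure M {x\<in>space M. f x = c}) (at_left c)"
      using tendsto_signed_moment_1_within[where S = "{..<c}" and e = 1]
      by (simp add: eventually_at_filter)
    show "\<forall>\<^sub>F t in at_left c. 0 \<le> signed_moment 1 t"
      using eventually_at_left_real[of "c - 1" c, simplified] by eventually_elim (use assms signed_moment_1_nonneg in simp)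
  qed simp
  ultimately show ?thesis
    by (simp add: signed_moment_1_eq)
qed

subsection \<open>The gap between the medians\<close>

definition log_moment :: "real \<Rightarrow> real" where
  "log_moment t = (\<integral>x. sgn (f x - t) * ln \<bar>f x - t\<bar> \<partial>M)"

lemma AE_not_between_medians:
  assumes "median_low < \<sigma>" "\<sigma> < \<upsilon>" "\<upsilon> < median_high"
  shows "AE x in M. f x \<le> \<sigma> \<or> \<upsilon> \<le> f x"
proof -
  have "signed_moment 1 \<sigma> = 0" "signed_moment 1 \<upsilon> = 0"
    using assms signed_moment_1_nonpos signed_moment_1_nonneg by (simp_all add: order_antisym)
  moreover have "{x\<in>space M. \<sigma> < f x} \<inter> {x\<in>space M. \<upsilon> < f x} = {x\<in>space M. \<upsilon> < f x}"
    "{x\<in>space M. f x < \<upsilon>} \<inter> {x\<in>space M. f x < \<sigma>} = {x\<in>space M. f x < \<sigma>}"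
    using assms by auto
  ultimately have "measure M ({x\<in>space M. \<sigma> < f x} - {x\<in>space M. \<upsilon> < f x})
      + measure M ({x\<in>space M. f x < \<upsilon>} - {x\<in>space M. f x < \<sigma>}) = 0"
    by (simp add: finite_measure_Diff' signed_moment_1_eq)
  then have "measure M ({x\<in>space M. \<sigma> < f x} - {x\<in>space M. \<upsilon> < f x}) = 0"
    by (smt (verit) measure_nonneg)
  then have "{x\<in>space M. \<sigma> < f x} - {x\<in>space M. \<upsilon> < f x} \<in> null_sets M"
    by (auto simp: null_sets_def emeasure_eq_measure)
  then show ?thesis
    by (rule AE_I') auto
qed

lemma AE_dist_ge_between_medians:
  assumes "median_low < t" "t < median_high"
  obtains \<delta> where "0 < \<delta>" "\<delta> \<le> 1" "AE x in M. \<delta> \<le> \<bar>f x - t\<bar>"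
proof
  define \<delta> where "\<delta> = min 1 (min ((t - median_low) / 2) ((median_high - t) / 2))"
  show "0 < \<delta>" "\<delta> \<le> 1"
    using assms by (auto simp: \<delta>_def)
  have "\<delta> \<le> (t - median_low) / 2" "\<delta> \<le> (median_high - t) / 2"
    by (simp_all add: \<delta>_def min_def)
  then have "AE x in M. f x \<le> t - \<delta> \<or> t + \<delta> \<le> f x"
    using \<open>0 < \<delta>\<close> assms by (intro AE_not_between_medians) simp_all
  then show "AE x in M. \<delta> \<le> \<bar>f x - t\<bar>"
    by eventually_elim auto
qed

lemma integrable_log_moment:
  assumes "0 < \<delta>" "AE x in M. \<delta> \<le> \<bar>f x - t\<bar>"
  shows "integrable M (\<lambda>x. sgn (f x - t) * ln \<bar>f x - t\<bar>)"
proof (rule Bochner_Integration.integrable_bound)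
  show "integrable M (\<lambda>x. \<bar>ln \<delta>\<bar> + \<bar>f x - t\<bar> powr 1)"
    using r0_gt_1 by (intro Bochner_Integration.integrable_add integrable_const integrable_abs_powr) auto
  show "AE x in M. norm (sgn (f x - t) * ln \<bar>f x - t\<bar>) \<le> norm (\<bar>ln \<delta>\<bar> + \<bar>f x - t\<bar> powr 1)"
    using assms(2)
  proof eventually_elim
    case (elim x)
    then show ?case
      using abs_ln_le[OF assms(1) elim] assms(1) by (simp add: abs_mult abs_sgn_eq)
  qed
qed measurable

lemma log_moment_strict_antimono:
  assumes "median_low < t" "t < t'" "t' < median_high"
  shows "log_moment t' < log_moment t"
  unfolding log_moment_def
proof (rule integral_less_AE_space)
  obtain \<delta> \<delta>' where "0 < \<delta>" "AE x in M. \<delta> \<le> \<bar>f x - t\<bar>" "0 < \<delta>'" "AE x in M. \<delta>' \<le> \<bar>f x - t'\<bar>"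
    using AE_dist_ge_between_medians assms by (metis order.strict_trans)
  then show "integrable M (\<lambda>x. sgn (f x - t') * ln \<bar>f x - t'\<bar>)"
    "integrable M (\<lambda>x. sgn (f x - t) * ln \<bar>f x - t\<bar>)"
    by (auto intro: integrable_log_moment)
  have "AE x in M. f x \<le> (median_low + t) / 2 \<or> (t' + median_high) / 2 \<le> f x"
    using assms by (intro AE_not_between_medians) auto
  then show "AE x in M. sgn (f x - t') * ln \<bar>f x - t'\<bar> < sgn (f x - t) * ln \<bar>f x - t\<bar>"
  proof eventually_elim
    case (elim x)
    then show ?case
    proof
      assume "f x \<le> (median_low + t) / 2"
      then have "ln (t - f x) < ln (t' - f x)"
        using assms by simp
      then show ?thesis
        using \<open>f x \<le> (median_low + t) / 2\<close> assms by (simp add: sgn_if abs_if)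
    next
      assume "(t' + median_high) / 2 \<le> f x"
      then have "ln (f x - t') < ln (f x - t)"
        using assms by simp
      then show ?thesis
        using \<open>(t' + median_high) / 2 \<le> f x\<close> assms by (simp add: sgn_if abs_if)
    qed
  qed
qed (rule emeasure_space_neq_0)

lemma signed_moment_div_eq:
  assumes "1 < r" "r \<le> r0" "signed_moment 1 t = 0"
  shows "signed_moment r t / (r - 1)
    = (\<integral>x. sgn (f x - t) * ((\<bar>f x - t\<bar> powr (r - 1) - 1) / (r - 1)) \<partial>M)"
proof -
  have "signed_moment r t / (r - 1) = (signed_moment r t - signed_moment 1 t) / (r - 1)"
    using assms(3) by simp
  also have "\<dots> = (\<integral>x. (signed_powr (r - 1) (f x - t) - sgn (f x - t)) / (r - 1) \<partial>M)"
    unfolding signed_moment_def using assms r0_gt_1 integrable_signed_powr[of 0 t]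
    by (simp add: integrable_signed_powr)
  also have "\<dots> = (\<integral>x. sgn (f x - t) * ((\<bar>f x - t\<bar> powr (r - 1) - 1) / (r - 1)) \<partial>M)"
    by (rule Bochner_Integration.integral_cong)
       (auto simp: signed_powr_def sgn_if diff_divide_distrib)
  finally show ?thesis .
qed

lemma abs_powr_diff_quotient_le_dominant:
  assumes "0 < \<delta>" "\<delta> \<le> 1" "\<delta> \<le> \<bar>f x - t\<bar>" "1 < r" "r < 1 + (r0 - 1) / 2"
  shows "\<bar>sgn (f x - t) * ((\<bar>f x - t\<bar> powr (r - 1) - 1) / (r - 1))\<bar>
    \<le> - ln \<delta> + (1 + (\<bar>f x\<bar> + \<bar>t\<bar>) powr r0) / ((r0 - 1) / 2)"
proof -
  have "\<bar>(\<bar>f x - t\<bar> powr (r - 1) - 1) / (r - 1)\<bar>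
      \<le> - ln \<delta> + \<bar>f x - t\<bar> powr (2 * ((r0 - 1) / 2)) / ((r0 - 1) / 2)"
    using assms by (intro abs_powr_diff_quotient_le; linarith)
  also have "\<dots> \<le> - ln \<delta> + (1 + (\<bar>f x\<bar> + \<bar>t\<bar>) powr r0) / ((r0 - 1) / 2)"
    using r0_gt_1 by (intro add_left_mono divide_right_mono abs_powr_le_dominant) simp_all
  moreover have "f x \<noteq> t"
    using assms(1,3) by auto
  ultimately show ?thesis
    by (simp add: abs_mult abs_sgn_eq)
qed

lemma tendsto_signed_moment_div_log_moment:
  assumes "median_low < t" "t < median_high"
  shows "((\<lambda>r. signed_moment r t / (r - 1)) \<longlongrightarrow> log_moment t) (at_right 1)"
proof -
  obtain \<delta> where \<delta>: "0 < \<delta>" "\<delta> \<le> 1" "AE x in M. \<delta> \<le> \<bar>f x - t\<bar>"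
    using AE_dist_ge_between_medians assms by blast
  define q where "q r x = sgn (f x - t) * ((\<bar>f x - t\<bar> powr (r - 1) - 1) / (r - 1))" for r x
  define w where "w x = - ln \<delta> + (1 + (\<bar>f x\<bar> + \<bar>t\<bar>) powr r0) / ((r0 - 1) / 2)" for x
  have "((\<lambda>r. integral\<^sup>L M (q r)) \<longlongrightarrow> log_moment t) (at_right 1)"
    unfolding log_moment_def
  proof (rule integral_dominated_convergence_within[where w = w])
    show "integrable M w"
      unfolding w_def by (intro Bochner_Integration.integrable_add integrable_const
          integrable_divide_zero integrable_dominant) simp
    show "AE x in M. ((\<lambda>r. q r x) \<longlongrightarrow> sgn (f x - t) * ln \<bar>f x - t\<bar>) (at_right 1)"
      using \<delta>(3)
    proof eventually_elim
      case (elim x)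
      then have "((\<lambda>s. (\<bar>f x - t\<bar> powr s - 1) / s) \<longlongrightarrow> ln \<bar>f x - t\<bar>) (at_right 0)"
        using \<delta>(1) by (intro tendsto_powr_diff_quotient) simp
      then have "((\<lambda>s. sgn (f x - t) * ((\<bar>f x - t\<bar> powr s - 1) / s))
          \<longlongrightarrow> sgn (f x - t) * ln \<bar>f x - t\<bar>) (at_right 0)"
        by (rule tendsto_mult_left)
      then show ?case
        unfolding q_def filterlim_at_right_to_0[of _ _ 1] by simp
    qed
    have "\<forall>\<^sub>F r in at_right 1. r < 1 + (r0 - 1) / 2"
      using r0_gt_1 by (auto simp: eventually_at_right_field intro!: exI[of _ "1 + (r0 - 1) / 2"])
    then show "\<forall>\<^sub>F r in at_right 1. AE x in M. \<bar>q r x\<bar> \<le> w x"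
      using eventually_at_right_less[of 1]
    proof eventually_elim
      case r: (elim r)
      show ?case
        using \<delta>(3)
      proof eventually_elim
        case (elim x)
        show ?case
          unfolding q_def w_def
          by (rule abs_powr_diff_quotient_le_dominant) (use elim r \<delta> in simp_all)
      qed
    qed
    show "q r \<in> borel_measurable M" for r
      unfolding q_def by measurable
  qed measurable
  moreover have "\<forall>\<^sub>F r in at_right 1. integral\<^sup>L M (q r) = signed_moment r t / (r - 1)"
    using eventually_at_right_1_le_r0
  proof eventually_elim
    case (elim r)
    moreover have "signed_moment 1 t = 0"
      using assms signed_moment_1_nonpos signed_moment_1_nonneg by (simp add: order_antisym)
    ultimately show ?case
      unfolding q_def by (intro signed_moment_div_eq[symmetric]) auto
  qed
  ultimately show ?thesis
    by (rule Lim_transform_eventually)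
qed

lemma eventually_less_tau_M_between_medians:
  assumes "median_low < t" "t < median_high" "0 < log_moment t"
  shows "\<forall>\<^sub>F r in at_right 1. t < tau_M r"
proof (rule eventually_less_tau_M)
  show "\<forall>\<^sub>F r in at_right 1. 0 < signed_moment r t"
    using order_tendstoD(1)[OF tendsto_signed_moment_div_log_moment[OF assms(1,2)] assms(3)]
      eventually_at_right_1_le_r0
    by eventually_elim (simp add: zero_less_divide_iff)
qed

lemma eventually_tau_M_less_between_medians:
  assumes "median_low < t" "t < median_high" "log_moment t < 0"
  shows "\<forall>\<^sub>F r in at_right 1. tau_M r < t"
proof (rule eventually_tau_M_less)
  show "\<forall>\<^sub>F r in at_right 1. signed_moment r t < 0"
    using order_tendstoD(2)[OF tendsto_signed_moment_div_log_moment[OF assms(1,2)] assms(3)]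
      eventually_at_right_1_le_r0
    by eventually_elim (simp add: divide_less_0_iff)
qed

theorem tau_M_tendsto_median:
  obtains L where "(tau_M \<longlongrightarrow> L) (at_right 1)" "median_low \<le> L" "L \<le> median_high"
proof -
  obtain c where c: "median_low \<le> c" "c \<le> median_high"
    "\<And>t. median_low < t \<Longrightarrow> t < c \<Longrightarrow> 0 < log_moment t"
    "\<And>t. c < t \<Longrightarrow> t < median_high \<Longrightarrow> log_moment t < 0"
    using strict_antimono_sign_change[of median_low median_high log_moment]
      median_low_le_high log_moment_strict_antimono by blast
  have "(tau_M \<longlongrightarrow> c) (at_right 1)"
  proof (rule order_tendstoI)
    fix t assume "t < c"
    show "\<forall>\<^sub>F r in at_right 1. t < tau_M r"
    proof (cases "t < median_low")
      case False
      define t' where "t' = (t + c) / 2"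
      have "t < t'" "median_low < t'" "t' < c"
        using False \<open>t < c\<close> by (auto simp: t'_def)
      then have "\<forall>\<^sub>F r in at_right 1. t' < tau_M r"
        using c by (intro eventually_less_tau_M_between_medians) auto
      then show ?thesis
        by eventually_elim (use \<open>t < t'\<close> in simp)
    qed (rule eventually_less_tau_M_below_median)
  next
    fix t assume "c < t"
    show "\<forall>\<^sub>F r in at_right 1. tau_M r < t"
    proof (cases "median_high < t")
      case False
      define t' where "t' = (c + t) / 2"
      have "t' < t" "c < t'" "t' < median_high"
        using False \<open>c < t\<close> by (auto simp: t'_def)
      then have "\<forall>\<^sub>F r in at_right 1. tau_M r < t'"
        using c by (intro eventually_tau_M_less_between_medians) auto
      then show ?thesis
        by eventually_elim (use \<open>t' < t\<close> in simp)
    qed (rule eventually_tau_M_less_above_median)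
  qed
  with c(1,2) that show ?thesis by blast
qed

end

section \<open>Lebesgue measure on an interval\<close>

lemma finite_Lr_function_lebesgue_on:
  fixes a b r0 :: real and f :: "real \<Rightarrow> real"
  assumes "a < b" "1 < r0" "in_Lr r0 {a..b} f"
  shows "finite_Lr_function (lebesgue_on {a..b}) f r0"
proof (intro finite_Lr_function.intro finite_Lr_function_axioms.intro)
  show "finite_measure (lebesgue_on {a..b})"
    by (simp add: finite_measure_lebesgue_on)
  show "0 < measure (lebesgue_on {a..b}) (space (lebesgue_on {a..b}))"
    using assms(1) by (simp add: measure_restrict_space)
  show "f \<in> borel_measurable (lebesgue_on {a..b})"
    using assms(3) by (simp add: in_Lr_def set_borel_measurable_def borel_measurable_restrict_space_iff)
  show "integrable (lebesgue_on {a..b}) (\<lambda>x. \<bar>f x\<bar> powr r0)"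
    using assms(3) by (simp add: in_Lr_def set_integrable_def integrable_restrict_space)
qed fact

theorem theorem4:
  fixes a b r0 :: real and f :: "real \<Rightarrow> real"
  assumes "a < b" and "r0 > 1" and "in_Lr r0 {a..b} f"
  shows "\<exists>L. ((\<lambda>r. tau r {a..b} f) \<longlongrightarrow> L) (at_right 1)
             \<and> L \<in> balanced_set {a..b} f"
proof -
  interpret finite_Lr_function "lebesgue_on {a..b}" f r0
    using assms by (intro finite_Lr_function_lebesgue_on)
  obtain L where L: "(tau_M \<longlongrightarrow> L) (at_right 1)" "median_low \<le> L" "L \<le> median_high"
    by (rule tau_M_tendsto_median)
  have tau_eq: "tau r {a..b} f = tau_M r" for r
    by (simp add: tau_def tau_M_def Lr_norm_def abs_moment_def set_lebesgue_integral_def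
        integral_restrict_space)
  have measure_eq: "measure (lebesgue_on {a..b}) {x\<in>space (lebesgue_on {a..b}). P x}
      = measure lebesgue {x\<in>{a..b}. P x}" for P
    by (subst measure_restrict_space) auto
  have "balanced {a..b} (\<lambda>x. f x - L)"
    using balanced_between_medians[OF L(2,3)] measure_eq by (simp add: balanced_def)
  with L(1) show ?thesis
    by (auto simp: tau_eq balanced_set_def)
qed

end
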